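(* Let $q$ be an indeterminate, let $\mathcal W$ be the division algebra over $\mathbb{C}(q)$ generated by $U^{\pm1},V^{\pm1}$ subject to $VU=q^2UV$ (the fraction division algebra of this quantum torus), and let $f\in\mathbb{C}(q)(X)$ be a nonzero rational function such that the algebra homomorphism $\Psi:\mathcal W\to\mathcal W$ with $\Psi(U)=f(U)V$ and $\Psi(V)=U^{-1}$ is an isomorphism. Then $\Psi$ has period $5$ (i.e. $\Psi^5=\mathrm{id}$) if and only if $f(f(U)V)=V\,f(U^{-1}f(V^{-1}))\,U$ in $\mathcal W$.
   Context: For a rational function $f\in\mathbb{C}(q)(X)$ and an element $Y\in\mathcal W$, $f(Y)$ denotes the evaluation of $f$ at $Y$ in $\mathcal W$ (assumed well defined). *)

theory Defs
  imports "HOL-Computational_Algebra.Computational_Algebra"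
begin

type_synonym cq = "complex poly fract"

definition qq :: cq where "qq = Fract [:0, 1:] 1"

type_synonym cqX = "cq poly fract"

definition peval :: "(cq \<Rightarrow> 'w::division_ring) \<Rightarrow> cq poly \<Rightarrow> 'w \<Rightarrow> 'w" where
  "peval emb p Y = (\<Sum>i\<le>degree p. emb (coeff p i) * Y ^ i)"

text \<open>Evaluation of a rational function, using a reduced representation p/r
  (coprime, r nonzero; the value does not depend on the choice up to units).\<close>
definition reval :: "(cq \<Rightarrow> 'w::division_ring) \<Rightarrow> cqX \<Rightarrow> 'w \<Rightarrow> 'w" where
  "reval emb f Y = (let (p, r) = (SOME (p, r). r \<noteq> 0 \<and> coprime p r \<and> f = Fract p r)
                    in peval emb p Y * inverse (peval emb r Y))"

inductive_set gen_divring :: "(cq \<Rightarrow> 'w::division_ring) \<Rightarrow> 'w \<Rightarrow> 'w \<Rightarrow> 'w set"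
  for emb U V where
  scal: "emb c \<in> gen_divring emb U V"
| genU: "U \<in> gen_divring emb U V"
| genV: "V \<in> gen_divring emb U V"
| add: "x \<in> gen_divring emb U V \<Longrightarrow> y \<in> gen_divring emb U V \<Longrightarrow> x + y \<in> gen_divring emb U V"
| neg: "x \<in> gen_divring emb U V \<Longrightarrow> - x \<in> gen_divring emb U V"
| mult: "x \<in> gen_divring emb U V \<Longrightarrow> y \<in> gen_divring emb U V \<Longrightarrow> x * y \<in> gen_divring emb U V"
| inv: "x \<in> gen_divring emb U V \<Longrightarrow> inverse x \<in> gen_divring emb U V"

text \<open>W is (up to isomorphism) the division algebra of fractions of the quantum torus:
  a division ring with a central embedding of C(q), generated by invertible U, V with
  V U = q^2 U V, in which the monomials U^i V^j (i, j integers) are C(q)-linearly independent.\<close>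
definition is_quantum_torus_fraction_algebra ::
  "(cq \<Rightarrow> 'w::division_ring) \<Rightarrow> 'w \<Rightarrow> 'w \<Rightarrow> bool" where
  "is_quantum_torus_fraction_algebra emb U V \<longleftrightarrow>
     (\<forall>a b. emb (a + b) = emb a + emb b) \<and>
     (\<forall>a b. emb (a * b) = emb a * emb b) \<and>
     emb 1 = 1 \<and>
     (\<forall>c x. emb c * x = x * emb c) \<and>
     U \<noteq> 0 \<and> V \<noteq> 0 \<and>
     V * U = emb (qq ^ 2) * U * V \<and>
     (\<forall>F c. finite F \<longrightarrow>
        (\<Sum>(i, j)\<in>F. emb (c (i, j)) * U powi i * V powi j) = 0 \<longrightarrow>
        (\<forall>ij\<in>F. c ij = 0)) \<and>
     gen_divring emb U V = UNIV"

end

theory Submission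
  imports Defs
begin

text \<open>Write \<open>F\<close> for evaluation of \<open>f\<close>. Since \<open>\<Psi>\<close> fixes the scalars, \<open>\<Psi> (F Y) = F (\<Psi> Y)\<close>, and
  with \<open>b = U\<inverse> F(V\<inverse>)\<close> and \<open>w = V F(b)\<close> (\<open>seed\<close> below) the map \<open>\<Psi>\<close> moves along the chain
  \<open>w \<mapsto> b \<mapsto> V\<inverse> \<mapsto> U \<mapsto> F(U) V \<mapsto> F(F(U) V) U\<inverse>\<close>.
  So \<open>\<Psi>\<^sup>5 w = w\<close> is exactly the stated identity. Conversely, \<open>\<Psi>\<^sup>5\<close> commutes with \<open>\<Psi>\<close>, so
  fixing \<open>w\<close> it also fixes \<open>V\<inverse> = \<Psi>\<^sup>2 w\<close> and \<open>U = \<Psi>\<^sup>3 w\<close>; being a homomorphism fixing the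
  scalars and the generators, it is the identity.\<close>

locale divring_hom =
  fixes h :: "'a::division_ring \<Rightarrow> 'b::division_ring"
  assumes hom_add: "h (x + y) = h x + h y"
    and hom_mult: "h (x * y) = h x * h y"
    and hom_one: "h 1 = 1"
begin

lemma hom_zero: "h 0 = 0"
  using hom_add[of 0 0] by simp

lemma hom_uminus: "h (- x) = - h x"
  using hom_add[of "- x" x] by (simp add: hom_zero eq_neg_iff_add_eq_0)

lemma hom_inverse: "h (inverse x) = inverse (h x)"
proof (cases "x = 0")
  case True
  then show ?thesis by (simp add: hom_zero)
next
  case False
  then have "h x * h (inverse x) = 1"
    by (simp flip: hom_mult add: hom_one)
  then show ?thesis by (rule inverse_unique [symmetric])
qed

lemma hom_nonzero: "x \<noteq> 0 \<Longrightarrow> h x \<noteq> 0"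
  using hom_mult[of x "inverse x"] by (auto simp: hom_one)

lemma hom_sum: "h (\<Sum>i\<in>A. g i) = (\<Sum>i\<in>A. h (g i))"
  by (induction A rule: infinite_finite_induct) (simp_all add: hom_zero hom_add)

lemma hom_power: "h (x ^ n) = h x ^ n"
  by (induction n) (simp_all add: hom_one hom_mult)

lemma hom_peval:
  assumes "\<And>c. h (emb c) = emb' c"
  shows "h (peval emb p Y) = peval emb' p (h Y)"
  unfolding peval_def by (simp add: hom_sum hom_mult hom_power assms)

lemma hom_reval:
  assumes "\<And>c. h (emb c) = emb' c"
  shows "h (reval emb f Y) = reval emb' f (h Y)"
  unfolding reval_def by (simp add: case_prod_beta hom_mult hom_inverse hom_peval [OF assms])

end

lemma divring_hom_id: "divring_hom id"
  by unfold_locales simp_all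

lemma divring_hom_comp:
  assumes "divring_hom g" and "divring_hom h"
  shows "divring_hom (g \<circ> h)"
  using assms by (simp add: divring_hom_def)

lemma divring_hom_funpow:
  fixes h :: "'a::division_ring \<Rightarrow> 'a"
  assumes "divring_hom h"
  shows "divring_hom (h ^^ n)"
  by (induction n) (simp_all only: funpow.simps divring_hom_id divring_hom_comp [OF assms])

lemma divring_hom_fixes_gen_divring:
  assumes "divring_hom h"
    and "\<And>c. h (emb c) = emb c" and "h U = U" and "h V = V"
    and "x \<in> gen_divring emb U V"
  shows "h x = x"
proof -
  interpret divring_hom h by fact
  from assms(5) show ?thesis
    by (induction x rule: gen_divring.induct)
       (simp_all add: assms(2-4) hom_add hom_mult hom_uminus hom_inverse)
qed

lemma funpow_fixed_point:
  assumes "f x = x"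
  shows "(f ^^ n) x = x"
  by (induction n) (simp_all add: assms)

lemma funpow_fixed_point_orbit:
  assumes "(h ^^ n) x = x"
  shows "(h ^^ n) ((h ^^ k) x) = (h ^^ k) x"
  by (metis assms funpow_add add.commute comp_apply)

locale twisted_UV_endo = divring_hom \<Psi> for \<Psi> :: "'a::division_ring \<Rightarrow> 'a" +
  fixes F :: "'a \<Rightarrow> 'a" and U V :: 'a
  assumes F_commute: "\<Psi> (F Y) = F (\<Psi> Y)"
    and Psi_U: "\<Psi> U = F U * V"
    and Psi_V: "\<Psi> V = inverse U"
    and U_nonzero: "U \<noteq> 0"
    and V_nonzero: "V \<noteq> 0"
begin

definition seed :: 'a where
  "seed = V * F (inverse U * F (inverse V))"

lemma Psi_inverse_V: "\<Psi> (inverse V) = U"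
  by (simp add: hom_inverse Psi_V)

lemma Psi_inverse_U: "\<Psi> (inverse U) = inverse (F U * V)"
  by (simp add: hom_inverse Psi_U)

lemma F_U_nonzero: "F U \<noteq> 0"
  using hom_nonzero [OF U_nonzero] by (auto simp: Psi_U)

lemma Psi_inverse_U_mult_F_inverse_V: "\<Psi> (inverse U * F (inverse V)) = inverse V"
proof -
  have "\<Psi> (inverse U * F (inverse V)) = inverse (F U * V) * F U"
    by (simp only: hom_mult F_commute Psi_inverse_U Psi_inverse_V)
  also have "\<dots> = inverse V"
    using F_U_nonzero V_nonzero by (simp add: nonzero_inverse_mult_distrib mult.assoc)
  finally show ?thesis .
qed

lemma Psi_seed: "\<Psi> seed = inverse U * F (inverse V)"
  unfolding seed_def by (simp only: hom_mult [of V] F_commute Psi_V Psi_inverse_U_mult_F_inverse_V)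

lemma funpow2_seed: "(\<Psi> ^^ 2) seed = inverse V"
  by (simp add: numeral_2_eq_2 Psi_seed Psi_inverse_U_mult_F_inverse_V)

lemma funpow5_seed: "(\<Psi> ^^ 5) seed = F (F U * V) * inverse U"
proof -
  have "(\<Psi> ^^ 5) seed = \<Psi> (\<Psi> (\<Psi> ((\<Psi> ^^ 2) seed)))"
    by (simp add: numeral_eq_Suc)
  then show ?thesis
    by (simp add: funpow2_seed Psi_inverse_V Psi_U hom_mult F_commute Psi_V)
qed

lemma funpow5_seed_fixed_iff: "(\<Psi> ^^ 5) seed = seed \<longleftrightarrow> F (F U * V) = seed * U"
  using nonzero_divide_eq_eq [OF U_nonzero] by (simp add: funpow5_seed divide_inverse)

lemma funpow5_fixes_generators:
  assumes "(\<Psi> ^^ 5) seed = seed"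
  shows "(\<Psi> ^^ 5) U = U" and "(\<Psi> ^^ 5) V = V"
proof -
  interpret Psi5: divring_hom "\<Psi> ^^ 5"
    by (rule divring_hom_funpow [OF divring_hom_axioms])
  have "(\<Psi> ^^ 3) seed = U"
    using funpow2_seed by (simp add: numeral_3_eq_3 numeral_2_eq_2 Psi_inverse_V)
  then show "(\<Psi> ^^ 5) U = U"
    using funpow_fixed_point_orbit [OF assms, of 3] by simp
  have "(\<Psi> ^^ 5) (inverse V) = inverse V"
    using funpow_fixed_point_orbit [OF assms, of 2] by (simp add: funpow2_seed)
  then show "(\<Psi> ^^ 5) V = V"
    by (simp add: Psi5.hom_inverse)
qed

end

theorem lemma11:
  fixes emb :: "cq \<Rightarrow> 'w::division_ring" and U V :: 'w
    and f :: cqX and \<Psi> :: "'w \<Rightarrow> 'w"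
  assumes W: "is_quantum_torus_fraction_algebra emb U V"
    and f_nz: "f \<noteq> 0"
    and hom_add: "\<And>x y. \<Psi> (x + y) = \<Psi> x + \<Psi> y"
    and hom_mult: "\<And>x y. \<Psi> (x * y) = \<Psi> x * \<Psi> y"
    and hom_scal: "\<And>c. \<Psi> (emb c) = emb c"
    and PsiU: "\<Psi> U = reval emb f U * V"
    and PsiV: "\<Psi> V = inverse U"
    and iso: "bij \<Psi>"
  shows "(\<Psi> ^^ 5 = id) \<longleftrightarrow>
         reval emb f (reval emb f U * V)
           = V * reval emb f (inverse U * reval emb f (inverse V)) * U"
proof -
  have U_nz: "U \<noteq> 0" and V_nz: "V \<noteq> 0" and emb_one: "emb 1 = 1"
    and generated: "gen_divring emb U V = UNIV"
    using W unfolding is_quantum_torus_fraction_algebra_def by auto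
  interpret divring_hom \<Psi>
    using hom_add hom_mult hom_scal [of 1] by unfold_locales (simp_all add: emb_one)
  interpret twisted_UV_endo \<Psi> "reval emb f" U V
    using hom_reval [OF hom_scal] PsiU PsiV U_nz V_nz by unfold_locales
  have "\<Psi> ^^ 5 = id \<longleftrightarrow> (\<Psi> ^^ 5) seed = seed"
  proof
    assume seed_fixed: "(\<Psi> ^^ 5) seed = seed"
    have "(\<Psi> ^^ 5) x = x" for x
      using divring_hom_funpow [OF divring_hom_axioms, of 5]
      by (rule divring_hom_fixes_gen_divring [where emb = emb and U = U and V = V])
         (simp_all add: funpow_fixed_point hom_scal funpow5_fixes_generators [OF seed_fixed] generated)
    then show "\<Psi> ^^ 5 = id" by auto
  qed simp
  also have "\<dots> \<longleftrightarrow> reval emb f (reval emb f U * V) = seed * U"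
    by (rule funpow5_seed_fixed_iff)
  also have "seed = V * reval emb f (inverse U * reval emb f (inverse V))"
    by (fact seed_def)
  finally show ?thesis .
qed

end
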